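(* Let $A\subseteq\mathbf{M}$ be finite, $X=\mathrm{gcl}(A)$ with the induced graph structure, and $g\in\mathrm{Aut}(X)$. Then there is $\gamma\in\mathrm{Aut}(\mathbf{M})$ with $\gamma\restriction X=g$.
   Context: Fix $\mathfrak{m}\ge2$. Graphs, $\delta(A)=\mathfrak{m}|A|-|\mathcal{R}(A)|$ ($\mathcal{R}(A)$ the edge set), $A\leqslant B$ iff $\delta(A')\ge\delta(A)$ for all $A\subseteq A'\subseteq B$ (for infinite $N$: $A\leqslant B$ for all finite $B\subseteq N$ containing $A$). $\mathsf{K_0}$ = finite graphs all of whose subgraphs have $\delta\ge0$. $\mathbf{M}$ is the $(\mathsf{K_0},\leqslant)$-generic: unique countable graph that is a union of a chain of finite $\leqslant$-closed subsets, in which isomorphisms between finite $\leqslant$-closed subsets extend to automorphisms, and into which every member of $\mathsf{K_0}$ embeds $\leqslant$-closedly. $\mathrm{cl}(A)$ is the smallest finite $\leqslant$-closed subset of $\mathbf{M}$ containing finite $A$; $\mathrm{d}(A)=\delta(\mathrm{cl}(A))$; $\mathrm{d}(m/A)=\mathrm{d}(\{m\}\cup A)-\mathrm{d}(A)$; $\mathrm{gcl}(X)=\{m\in\mathbf{M}:\mathrm{d}(m/A)=0$ for some finite $A\subseteq X\}$. *)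

theory Defs
  imports Main "HOL-Library.Countable_Set"
begin

text \<open>Graphs are given by a vertex set and an edge relation E (symmetric, irreflexive on the
vertex set). The parameter mm is the fixed natural number \<open>m \<ge> 2\<close>.\<close>

definition graph_on :: "'a set \<Rightarrow> ('a \<Rightarrow> 'a \<Rightarrow> bool) \<Rightarrow> bool" where
  "graph_on V E \<longleftrightarrow> (\<forall>x\<in>V. \<forall>y\<in>V. E x y \<longrightarrow> E y x) \<and> (\<forall>x\<in>V. \<not> E x x)"

definition edges :: "('a \<Rightarrow> 'a \<Rightarrow> bool) \<Rightarrow> 'a set \<Rightarrow> 'a set set" where
  "edges E A = {{x, y} | x y. x \<in> A \<and> y \<in> A \<and> E x y}"

definition delta :: "nat \<Rightarrow> ('a \<Rightarrow> 'a \<Rightarrow> bool) \<Rightarrow> 'a set \<Rightarrow> int" where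
  "delta mm E A = int mm * int (card A) - int (card (edges E A))"

text \<open>For finite N this is the definition for finite graphs; for infinite N it is equivalent
  to A \<le> B for all finite B between A and N.\<close>
definition le_closed :: "nat \<Rightarrow> ('a \<Rightarrow> 'a \<Rightarrow> bool) \<Rightarrow> 'a set \<Rightarrow> 'a set \<Rightarrow> bool" where
  "le_closed mm E A N \<longleftrightarrow> A \<subseteq> N \<and>
     (\<forall>A'. A \<subseteq> A' \<and> A' \<subseteq> N \<and> finite A' \<longrightarrow> delta mm E A' \<ge> delta mm E A)"

definition in_K0 :: "nat \<Rightarrow> 'b set \<Rightarrow> ('b \<Rightarrow> 'b \<Rightarrow> bool) \<Rightarrow> bool" where
  "in_K0 mm V E \<longleftrightarrow> finite V \<and> graph_on V E \<and> (\<forall>A\<subseteq>V. delta mm E A \<ge> 0)"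

definition partial_iso :: "('a \<Rightarrow> 'a \<Rightarrow> bool) \<Rightarrow> ('b \<Rightarrow> 'b \<Rightarrow> bool) \<Rightarrow> ('a \<Rightarrow> 'b) \<Rightarrow> 'a set \<Rightarrow> 'b set \<Rightarrow> bool" where
  "partial_iso E F f A B \<longleftrightarrow> bij_betw f A B \<and> (\<forall>x\<in>A. \<forall>y\<in>A. E x y \<longleftrightarrow> F (f x) (f y))"

definition automorphism :: "('a \<Rightarrow> 'a \<Rightarrow> bool) \<Rightarrow> 'a set \<Rightarrow> ('a \<Rightarrow> 'a) \<Rightarrow> bool" where
  "automorphism E X g \<longleftrightarrow> partial_iso E E g X X"

definition generic :: "nat \<Rightarrow> 'a set \<Rightarrow> ('a \<Rightarrow> 'a \<Rightarrow> bool) \<Rightarrow> bool" where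
  "generic mm M E \<longleftrightarrow>
     countable M \<and> graph_on M E \<and>
     (\<exists>\<C>. Complete_Partial_Order.chain (\<subseteq>) \<C> \<and> \<Union>\<C> = M \<and>
          (\<forall>C\<in>\<C>. finite C \<and> le_closed mm E C M)) \<and>
     (\<forall>A B f. finite A \<and> finite B \<and> le_closed mm E A M \<and> le_closed mm E B M \<and>
          partial_iso E E f A B \<longrightarrow> (\<exists>\<sigma>. automorphism E M \<sigma> \<and> (\<forall>x\<in>A. \<sigma> x = f x))) \<and>
     (\<forall>(V :: nat set) F. in_K0 mm V F \<longrightarrow>
          (\<exists>f. partial_iso F E f V (f ` V) \<and> f ` V \<subseteq> M \<and> le_closed mm E (f ` V) M))"

definition cl :: "nat \<Rightarrow> 'a set \<Rightarrow> ('a \<Rightarrow> 'a \<Rightarrow> bool) \<Rightarrow> 'a set \<Rightarrow> 'a set" where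
  "cl mm M E A = \<Inter>{B. finite B \<and> A \<subseteq> B \<and> le_closed mm E B M}"

definition dd :: "nat \<Rightarrow> 'a set \<Rightarrow> ('a \<Rightarrow> 'a \<Rightarrow> bool) \<Rightarrow> 'a set \<Rightarrow> int" where
  "dd mm M E A = delta mm E (cl mm M E A)"

definition dd_rel :: "nat \<Rightarrow> 'a set \<Rightarrow> ('a \<Rightarrow> 'a \<Rightarrow> bool) \<Rightarrow> 'a \<Rightarrow> 'a set \<Rightarrow> int" where
  "dd_rel mm M E x A = dd mm M E (insert x A) - dd mm M E A"

definition gcl :: "nat \<Rightarrow> 'a set \<Rightarrow> ('a \<Rightarrow> 'a \<Rightarrow> bool) \<Rightarrow> 'a set \<Rightarrow> 'a set" where
  "gcl mm M E X = {x \<in> M. \<exists>A. A \<subseteq> X \<and> finite A \<and> dd_rel mm M E x A = 0}"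

end

theory Submission
  imports Defs
begin

text \<open>
  \<open>X = gcl(A)\<close> consists of the points that do not raise \<open>d\<close> over \<open>A\<close>. By submodularity
  of \<open>d\<close>, every finite \<open>Z \<subseteq> X\<close> has \<open>cl(A \<union> Z) \<subseteq> X\<close> of predimension \<open>d(A)\<close>, while
  adjoining points outside \<open>X\<close> strictly raises \<open>\<delta>\<close>. Hence a subset of \<open>X\<close> that is
  \<open>\<le>\<close>-closed in \<open>X\<close> is \<open>\<le>\<close>-closed in \<open>M\<close>, so \<open>g\<close> preserves closed sets; and a finite
  closed \<open>Y\<close> with \<open>\<delta>(Y \<inter> X) = d(A)\<close> has no edges to \<open>X - Y\<close> and remains closed after
  adjoining any closed \<open>Z\<close> with \<open>Y \<inter> X \<subseteq> Z \<subseteq> X\<close>.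

  The extension of \<open>g\<close> is built by back-and-forth through partial isomorphisms
  \<open>X \<union> C \<rightarrow> X \<union> D\<close> extending \<open>g\<close>, with \<open>C\<close> and \<open>D\<close> of this kind. To add a point \<open>m\<close>,
  take \<open>Y = cl(A \<union> C \<union> {m})\<close>; by homogeneity the map on the closed set \<open>C \<union> (Y \<inter> X)\<close>
  extends to an automorphism \<open>\<sigma>\<close> of \<open>M\<close>. Comparing \<open>d\<close>-values shows that \<open>\<sigma>\<close> maps
  \<open>Y - X\<close> outside \<open>X\<close>, so gluing \<open>g\<close> on \<open>X\<close> with \<open>\<sigma>\<close> on \<open>Y\<close> is again a partial
  isomorphism: neither \<open>Y\<close> nor \<open>\<sigma>(Y)\<close> has edges to the rest of \<open>X\<close>.
\<close>

section \<open>The predimension \<open>\<delta>\<close>\<close>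

lemma edges_subset: "e \<in> edges E S \<Longrightarrow> e \<subseteq> S"
  by (auto simp: edges_def)

lemma edges_mono: "P \<subseteq> Q \<Longrightarrow> edges E P \<subseteq> edges E Q"
  by (auto simp: edges_def)

lemma finite_edges: "finite S \<Longrightarrow> finite (edges E S)"
  by (rule finite_subset[of _ "Pow S"]) (auto simp: edges_def)

lemma edges_Int: "edges E (P \<inter> Q) = edges E P \<inter> edges E Q"
proof
  show "edges E P \<inter> edges E Q \<subseteq> edges E (P \<inter> Q)"
  proof
    fix e assume e: "e \<in> edges E P \<inter> edges E Q"
    then obtain x y where "e = {x, y}" "x \<in> P" "y \<in> P" "E x y"
      by (auto simp: edges_def)
    moreover have "e \<subseteq> Q"
      using e edges_subset by blast
    ultimately show "e \<in> edges E (P \<inter> Q)"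
      by (auto simp: edges_def)
  qed
qed (auto simp: edges_def)

lemma delta_Un_Int:
  assumes "finite P" "finite Q"
  shows "delta mm E (P \<union> Q) + delta mm E (P \<inter> Q)
           + int (card (edges E (P \<union> Q) - (edges E P \<union> edges E Q)))
         = delta mm E P + delta mm E Q"
proof -
  have fin: "finite (edges E (P \<union> Q))"
    using assms finite_edges by blast
  have sub: "edges E P \<union> edges E Q \<subseteq> edges E (P \<union> Q)"
    by (simp add: edges_mono)
  have "card (edges E (P \<union> Q))
          = card (edges E P \<union> edges E Q) + card (edges E (P \<union> Q) - (edges E P \<union> edges E Q))"
    using card_Diff_subset[OF finite_subset[OF sub fin] sub] card_mono[OF fin sub] by linarith
  moreover have "card (edges E P \<union> edges E Q) + card (edges E (P \<inter> Q))
                   = card (edges E P) + card (edges E Q)"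
    using card_Un_Int[OF finite_edges[OF assms(1)] finite_edges[OF assms(2)], of E E]
    by (simp add: edges_Int)
  moreover have "int mm * int (card (P \<union> Q)) + int mm * int (card (P \<inter> Q))
                   = int mm * int (card P) + int mm * int (card Q)"
    using card_Un_Int[OF assms] by (metis distrib_left of_nat_add)
  ultimately show ?thesis
    unfolding delta_def by linarith
qed

lemma delta_submodular:
  "finite P \<Longrightarrow> finite Q \<Longrightarrow> delta mm E (P \<union> Q) + delta mm E (P \<inter> Q) \<le> delta mm E P + delta mm E Q"
  using delta_Un_Int[of P Q mm E] by linarith

definition no_edges_between :: "('a \<Rightarrow> 'a \<Rightarrow> bool) \<Rightarrow> 'a set \<Rightarrow> 'a set \<Rightarrow> bool" where
  "no_edges_between E P Q \<longleftrightarrow> (\<forall>x\<in>P. \<forall>y\<in>Q. \<not> E x y \<and> \<not> E y x)"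

lemma no_edges_between_commute: "no_edges_between E P Q \<longleftrightarrow> no_edges_between E Q P"
  by (auto simp: no_edges_between_def)

lemma no_edges_between_mono:
  "no_edges_between E P Q \<Longrightarrow> P' \<subseteq> P \<Longrightarrow> Q' \<subseteq> Q \<Longrightarrow> no_edges_between E P' Q'"
  by (auto simp: no_edges_between_def)

lemma delta_Un_Int_eq_if_no_edges_between:
  assumes "finite P" "finite Q" "no_edges_between E (P - Q) (Q - P)"
  shows "delta mm E (P \<union> Q) + delta mm E (P \<inter> Q) = delta mm E P + delta mm E Q"
proof -
  have "edges E (P \<union> Q) \<subseteq> edges E P \<union> edges E Q"
  proof
    fix e assume "e \<in> edges E (P \<union> Q)"
    then obtain x y where e: "e = {x, y}" "x \<in> P \<union> Q" "y \<in> P \<union> Q" "E x y"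
      by (auto simp: edges_def)
    then have "x \<in> P \<and> y \<in> P \<or> x \<in> Q \<and> y \<in> Q"
      using assms(3) by (auto simp: no_edges_between_def)
    then show "e \<in> edges E P \<union> edges E Q"
      using e by (auto simp: edges_def)
  qed
  then have "edges E (P \<union> Q) - (edges E P \<union> edges E Q) = {}"
    by blast
  then show ?thesis
    using delta_Un_Int[OF assms(1,2), of mm E] by (metis add.right_neutral card.empty of_nat_0)
qed

lemma delta_Un_Int_less_if_edge:
  assumes "finite P" "finite Q" "x \<in> P - Q" "y \<in> Q - P" "E x y"
  shows "delta mm E (P \<union> Q) + delta mm E (P \<inter> Q) < delta mm E P + delta mm E Q"
proof -
  have "{x, y} \<in> edges E (P \<union> Q) - (edges E P \<union> edges E Q)"
    using assms(3-5) edges_subset[of "{x, y}" E P] edges_subset[of "{x, y}" E Q]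
    by (auto simp: edges_def)
  then have "card (edges E (P \<union> Q) - (edges E P \<union> edges E Q)) > 0"
    using assms(1,2) finite_edges by (metis card_gt_0_iff empty_iff finite_Diff finite_UnI)
  then show ?thesis
    using delta_Un_Int[OF assms(1,2), of mm E] by linarith
qed

lemma delta_image:
  assumes "inj_on f S" "\<forall>x\<in>S. \<forall>y\<in>S. E x y \<longleftrightarrow> F (f x) (f y)"
  shows "delta mm F (f ` S) = delta mm E S"
proof -
  have "edges F (f ` S) = image f ` edges E S"
  proof
    show "edges F (f ` S) \<subseteq> image f ` edges E S"
    proof
      fix e assume "e \<in> edges F (f ` S)"
      then obtain x y where "e = f ` {x, y}" "x \<in> S" "y \<in> S" "F (f x) (f y)"
        by (auto simp: edges_def)
      moreover have "{x, y} \<in> edges E S"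
        using assms(2) calculation by (auto simp: edges_def)
      ultimately show "e \<in> image f ` edges E S"
        by blast
    qed
    show "image f ` edges E S \<subseteq> edges F (f ` S)"
      using assms(2) by (auto simp: edges_def)
  qed
  moreover have "inj_on (image f) (edges E S)"
    using inj_on_image_Pow[OF assms(1)] edges_subset by (meson PowI inj_on_subset subsetI)
  ultimately show ?thesis
    using card_image[OF assms(1)] by (simp add: delta_def card_image)
qed

section \<open>Partial isomorphisms and back-and-forth\<close>

lemma partial_iso_restrict:
  assumes "partial_iso E F f A B" "S \<subseteq> A"
  shows "partial_iso E F f S (f ` S)"
proof -
  have "inj_on f S"
    using assms by (metis partial_iso_def bij_betw_imp_inj_on inj_on_subset)
  then show ?thesis
    using assms by (auto simp: partial_iso_def inj_on_imp_bij_betw)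
qed

lemma partial_iso_inv_into:
  assumes "partial_iso E F f A B"
  shows "partial_iso F E (inv_into A f) B A"
proof -
  have bij: "bij_betw f A B"
    using assms by (simp add: partial_iso_def)
  have "F x y \<longleftrightarrow> E (inv_into A f x) (inv_into A f y)" if "x \<in> B" "y \<in> B" for x y
  proof -
    have "inv_into A f x \<in> A" "inv_into A f y \<in> A"
      using that bij by (metis bij_betw_def inv_into_into)+
    moreover have "f (inv_into A f x) = x" "f (inv_into A f y) = y"
      using that bij by (metis bij_betw_def f_inv_into_f)+
    ultimately show ?thesis
      using assms by (metis partial_iso_def)
  qed
  then show ?thesis
    using bij_betw_inv_into[OF bij] by (simp add: partial_iso_def)
qed

lemma automorphism_inv_into: "automorphism E N f \<Longrightarrow> automorphism E N (inv_into N f)"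
  by (simp add: automorphism_def partial_iso_inv_into)

lemma delta_partial_iso:
  assumes "partial_iso E F f S T"
  shows "delta mm F T = delta mm E S"
proof -
  have "inj_on f S" "f ` S = T" "\<forall>x\<in>S. \<forall>y\<in>S. E x y \<longleftrightarrow> F (f x) (f y)"
    using assms by (auto simp: partial_iso_def bij_betw_def)
  then show ?thesis
    using delta_image[of f S E F mm] by simp
qed

lemma le_closed_mono:
  "le_closed mm E B N \<Longrightarrow> B \<subseteq> N' \<Longrightarrow> N' \<subseteq> N \<Longrightarrow> le_closed mm E B N'"
  by (auto simp: le_closed_def)

lemma le_closed_image:
  assumes f: "automorphism E N f" and B: "le_closed mm E B N"
  shows "le_closed mm E (f ` B) N"
  unfolding le_closed_def
proof (intro conjI allI impI)
  have iso: "partial_iso E E f N N"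
    using f by (simp add: automorphism_def)
  then have surj: "f ` N = N"
    by (simp add: partial_iso_def bij_betw_def)
  have BN: "B \<subseteq> N"
    using B by (simp add: le_closed_def)
  then show "f ` B \<subseteq> N"
    using surj by blast
  have inj: "inj_on f N"
    using iso by (simp add: partial_iso_def bij_betw_def)
  fix A' assume A': "f ` B \<subseteq> A' \<and> A' \<subseteq> N \<and> finite A'"
  let ?P = "inv_into N f ` A'"
  have P_A': "delta mm E ?P = delta mm E A'"
    using A' delta_partial_iso[OF partial_iso_restrict[OF partial_iso_inv_into[OF iso]], of A'] by simp
  have B_P: "B \<subseteq> ?P"
  proof
    fix b assume b: "b \<in> B"
    then have "inv_into N f (f b) = b"
      using BN inj by (simp add: inv_into_f_f subsetD)
    moreover have "f b \<in> A'"
      using A' b by blast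
    ultimately show "b \<in> ?P"
      by (metis imageI)
  qed
  have P_N: "?P \<subseteq> N"
  proof
    fix x assume "x \<in> ?P"
    then obtain y where "y \<in> A'" "x = inv_into N f y"
      by blast
    then show "x \<in> N"
      using A' surj by (metis inv_into_into subsetD)
  qed
  have "delta mm E B \<le> delta mm E ?P"
    using B B_P P_N A' unfolding le_closed_def by blast
  then have "delta mm E B \<le> delta mm E A'"
    using P_A' by simp
  moreover have "delta mm E (f ` B) = delta mm E B"
    by (rule delta_partial_iso[OF partial_iso_restrict[OF iso BN]])
  ultimately show "delta mm E (f ` B) \<le> delta mm E A'"
    by simp
qed

lemma partial_iso_glue:
  assumes g: "partial_iso E F g X X'" and s: "partial_iso E F s Y Y'"
    and agree: "\<forall>x\<in>X \<inter> Y. s x = g x"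
    and s_out: "s ` (Y - X) \<inter> X' = {}" and g_out: "g ` (X - Y) \<inter> Y' = {}"
    and free: "no_edges_between E (X - Y) (Y - X)"
    and free': "no_edges_between F (X' - Y') (Y' - X')"
  shows "partial_iso E F (\<lambda>x. if x \<in> X then g x else s x) (X \<union> Y) (X' \<union> Y')"
proof -
  define h where "h x = (if x \<in> X then g x else s x)" for x
  have gX: "g ` X = X'" "inj_on g X" and sY: "s ` Y = Y'" "inj_on s Y"
    using g s by (auto simp: partial_iso_def bij_betw_def)
  have hY: "h y = s y" if "y \<in> Y" for y
    using that agree by (simp add: h_def)
  have h_out: "h y \<in> Y' - X'" if "y \<in> Y - X" for y
    using that s_out sY by (auto simp: h_def)
  have g_out': "g x \<in> X' - Y'" if "x \<in> X - Y" for x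
    using that g_out gX by blast
  have "inj_on h X" "inj_on h Y"
    using gX(2) sY(2) hY by (auto simp: h_def inj_on_def)
  moreover have "h ` (X - Y) \<inter> h ` (Y - X) = {}"
    using g_out' h_out by (fastforce simp: h_def)
  ultimately have "inj_on h (X \<union> Y)"
    by (simp add: inj_on_Un)
  moreover have "h ` X = X'" "h ` Y = Y'"
    using gX(1) sY(1) hY by (auto simp: h_def cong: image_cong)
  then have "h ` (X \<union> Y) = X' \<union> Y'"
    by (simp add: image_Un)
  moreover have "E x y \<longleftrightarrow> F (h x) (h y)" if xy: "x \<in> X \<union> Y" "y \<in> X \<union> Y" for x y
  proof -
    consider "x \<in> X" "y \<in> X" | "x \<in> Y" "y \<in> Y"
      | "x \<in> X - Y" "y \<in> Y - X" | "x \<in> Y - X" "y \<in> X - Y"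
      using xy by blast
    then show ?thesis
    proof cases
      case 1
      then show ?thesis using g by (simp add: partial_iso_def h_def)
    next
      case 2
      then show ?thesis using s hY by (simp add: partial_iso_def)
    next
      case 3
      then show ?thesis
        using h_out g_out' free free' by (simp add: no_edges_between_def h_def)
    next
      case 4
      then show ?thesis
        using h_out g_out' free free' by (simp add: no_edges_between_def h_def)
    qed
  qed
  ultimately show ?thesis
    by (simp add: partial_iso_def bij_betw_def h_def[abs_def])
qed

lemma automorphism_Union_chain:
  fixes h :: "nat \<Rightarrow> 'a \<Rightarrow> 'a"
  assumes iso: "\<And>n. partial_iso E E (h n) (C n) (D n)"
    and mono: "\<And>n. C n \<subseteq> C (Suc n)"
    and ext: "\<And>n x. x \<in> C n \<Longrightarrow> h (Suc n) x = h n x"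
    and C: "(\<Union>n. C n) = M" and D: "(\<Union>n. D n) = M"
  shows "\<exists>\<gamma>. automorphism E M \<gamma> \<and> (\<forall>x\<in>C 0. \<gamma> x = h 0 x)"
proof -
  have C_mono: "C n \<subseteq> C n'" if "n \<le> n'" for n n'
    using lift_Suc_mono_le[of C, OF mono that] .
  have h_ext: "h n' x = h n x" if "n \<le> n'" "x \<in> C n" for n n' x
    using that(1)
  proof (induction n' rule: dec_induct)
    case (step q)
    then have "x \<in> C q"
      using C_mono that(2) by blast
    then show ?case
      using ext step.IH by simp
  qed simp
  define \<gamma> where "\<gamma> x = h (LEAST n. x \<in> C n) x" for x
  have \<gamma>: "\<gamma> x = h n x" if "x \<in> C n" for x n
  proof -
    have "(LEAST n. x \<in> C n) \<le> n" "x \<in> C (LEAST n. x \<in> C n)"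
      using that by (auto intro: Least_le LeastI)
    then show ?thesis
      unfolding \<gamma>_def by (rule h_ext[symmetric])
  qed
  have common: "\<exists>n. x \<in> C n \<and> y \<in> C n" if xy: "x \<in> M" "y \<in> M" for x y
  proof -
    obtain i j where "x \<in> C i" "y \<in> C j"
      using xy C by blast
    then show ?thesis
      using C_mono[of i "max i j"] C_mono[of j "max i j"] by auto
  qed
  have img: "h n ` C n = D n" and inj: "inj_on (h n) (C n)"
    and edge: "\<And>x y. x \<in> C n \<Longrightarrow> y \<in> C n \<Longrightarrow> E x y \<longleftrightarrow> E (h n x) (h n y)" for n
    using iso[of n] by (auto simp: partial_iso_def bij_betw_def)
  have "inj_on \<gamma> M"
  proof (rule inj_onI)
    fix x y assume "x \<in> M" "y \<in> M" "\<gamma> x = \<gamma> y"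
    then obtain n where "x \<in> C n" "y \<in> C n" "h n x = h n y"
      using common \<gamma> by metis
    then show "x = y"
      using inj by (meson inj_onD)
  qed
  moreover have "\<gamma> ` M = M"
  proof
    show "\<gamma> ` M \<subseteq> M"
    proof
      fix y assume "y \<in> \<gamma> ` M"
      then obtain n x where "x \<in> C n" "y = h n x"
        using C \<gamma> by blast
      then show "y \<in> M"
        using img D by blast
    qed
    show "M \<subseteq> \<gamma> ` M"
    proof
      fix y assume "y \<in> M"
      then obtain n x where "x \<in> C n" "y = h n x"
        using D img by blast
      then have "x \<in> M" "y = \<gamma> x"
        using C \<gamma> by auto
      then show "y \<in> \<gamma> ` M"
        by blast
    qed
  qed
  moreover have "E x y \<longleftrightarrow> E (\<gamma> x) (\<gamma> y)" if xy: "x \<in> M" "y \<in> M" for x y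
  proof -
    obtain n where "x \<in> C n" "y \<in> C n"
      using common[OF xy] by blast
    then show ?thesis
      using edge \<gamma> by simp
  qed
  ultimately have "automorphism E M \<gamma>"
    by (simp add: automorphism_def partial_iso_def bij_betw_def)
  then show ?thesis
    using \<gamma> by blast
qed

lemma back_and_forth:
  assumes "countable M"
    and iso: "\<And>h C D. P h C D \<Longrightarrow> partial_iso E E h C D \<and> C \<subseteq> M \<and> D \<subseteq> M"
    and start: "P h\<^sub>0 C\<^sub>0 D\<^sub>0"
    and step: "\<And>h C D m. P h C D \<Longrightarrow> m \<in> M \<Longrightarrow>
      \<exists>h' C' D'. P h' C' D' \<and> insert m C \<subseteq> C' \<and> insert m D \<subseteq> D' \<and> (\<forall>x\<in>C. h' x = h x)"
  shows "\<exists>\<gamma>. automorphism E M \<gamma> \<and> (\<forall>x\<in>C\<^sub>0. \<gamma> x = h\<^sub>0 x)"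
proof (cases "M = {}")
  case True
  then have "automorphism E M h\<^sub>0"
    by (simp add: automorphism_def partial_iso_def bij_betw_def)
  moreover have "C\<^sub>0 = {}"
    using iso[OF start] True by blast
  ultimately show ?thesis
    by blast
next
  case False
  define e where "e = from_nat_into M"
  have e: "e n \<in> M" "x \<in> M \<Longrightarrow> \<exists>n. e n = x" for n x
    unfolding e_def using from_nat_into[OF False] from_nat_into_surj[OF \<open>countable M\<close>] by metis+
  define P' where "P' n s \<longleftrightarrow> P (fst s) (fst (snd s)) (snd (snd s)) \<and> (n = 0 \<longrightarrow> s = (h\<^sub>0, C\<^sub>0, D\<^sub>0))"
    for n :: nat and s :: "('a \<Rightarrow> 'a) \<times> 'a set \<times> 'a set"
  define Q where "Q n s s' \<longleftrightarrow> insert (e n) (fst (snd s)) \<subseteq> fst (snd s')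
    \<and> insert (e n) (snd (snd s)) \<subseteq> snd (snd s') \<and> (\<forall>x\<in>fst (snd s). fst s' x = fst s x)"
    for n and s s' :: "('a \<Rightarrow> 'a) \<times> 'a set \<times> 'a set"
  have "\<exists>s'. P' (Suc n) s' \<and> Q n s s'" if Ps: "P' n s" for n s
  proof -
    obtain h' C' D' where "P h' C' D'" "insert (e n) (fst (snd s)) \<subseteq> C'"
        "insert (e n) (snd (snd s)) \<subseteq> D'" "\<forall>x\<in>fst (snd s). h' x = fst s x"
      using step[OF _ e(1), of "fst s" "fst (snd s)" "snd (snd s)" n] Ps unfolding P'_def by blast
    then show ?thesis
      unfolding P'_def Q_def by (intro exI[of _ "(h', C', D')"]) simp
  qed
  moreover have "P' 0 (h\<^sub>0, C\<^sub>0, D\<^sub>0)"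
    using start by (simp add: P'_def)
  ultimately obtain s where s: "\<And>n. P' n (s n) \<and> Q n (s n) (s (Suc n))"
    using dependent_nat_choice[of P' Q] by blast
  define h where "h n = fst (s n)" for n
  define C where "C n = fst (snd (s n))" for n
  define D where "D n = snd (snd (s n))" for n
  have P: "P (h n) (C n) (D n)" and s0: "s 0 = (h\<^sub>0, C\<^sub>0, D\<^sub>0)"
    and grow: "insert (e n) (C n) \<subseteq> C (Suc n)" "insert (e n) (D n) \<subseteq> D (Suc n)"
    and ext: "\<And>x. x \<in> C n \<Longrightarrow> h (Suc n) x = h n x" for n
    using s[of n] s[of 0] unfolding P'_def Q_def h_def C_def D_def by auto
  have "(\<Union>n. C n) = M"
  proof
    show "(\<Union>n. C n) \<subseteq> M"
      using iso[OF P] by blast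
    show "M \<subseteq> (\<Union>n. C n)"
    proof
      fix x assume "x \<in> M"
      then obtain n where "e n = x"
        using e(2) by blast
      then show "x \<in> (\<Union>n. C n)"
        using grow(1)[of n] by blast
    qed
  qed
  moreover have "(\<Union>n. D n) = M"
  proof
    show "(\<Union>n. D n) \<subseteq> M"
      using iso[OF P] by blast
    show "M \<subseteq> (\<Union>n. D n)"
    proof
      fix x assume "x \<in> M"
      then obtain n where "e n = x"
        using e(2) by blast
      then show "x \<in> (\<Union>n. D n)"
        using grow(2)[of n] by blast
    qed
  qed
  moreover have "partial_iso E E (h n) (C n) (D n)" "C n \<subseteq> C (Suc n)" for n
    using iso[OF P] grow(1) by auto
  ultimately obtain \<gamma> where "automorphism E M \<gamma>" "\<forall>x\<in>C 0. \<gamma> x = h 0 x"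
    using automorphism_Union_chain[of E h C D M] ext by blast
  moreover have "h 0 = h\<^sub>0" "C 0 = C\<^sub>0"
    using s0 by (simp_all add: h_def C_def)
  ultimately show ?thesis
    by auto
qed

section \<open>Closures in the generic graph\<close>

locale generic_graph =
  fixes mm :: nat and M :: "'a set" and E :: "'a \<Rightarrow> 'a \<Rightarrow> bool"
  assumes generic: "generic mm M E"
begin

abbreviation "\<delta> \<equiv> delta mm E"
abbreviation "closed B \<equiv> le_closed mm E B M"
abbreviation "d \<equiv> dd mm M E"
abbreviation "clM \<equiv> cl mm M E"

lemma edge_sym: "x \<in> M \<Longrightarrow> y \<in> M \<Longrightarrow> E x y \<Longrightarrow> E y x"
  using generic by (auto simp: generic_def graph_on_def)

lemma countable_M: "countable M"
  using generic by (simp add: generic_def)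

lemma homogeneous:
  "finite B \<Longrightarrow> finite B' \<Longrightarrow> closed B \<Longrightarrow> closed B' \<Longrightarrow> partial_iso E E f B B'
    \<Longrightarrow> \<exists>\<sigma>. automorphism E M \<sigma> \<and> (\<forall>x\<in>B. \<sigma> x = f x)"
  using generic unfolding generic_def by blast

lemma closed_empty: "closed {}"
proof -
  have "\<forall>(V :: nat set) F. in_K0 mm V F \<longrightarrow> (\<exists>f. partial_iso F E f V (f ` V) \<and> f ` V \<subseteq> M \<and> closed (f ` V))"
    using generic unfolding generic_def by (elim conjE)
  moreover have "in_K0 mm ({} :: nat set) (\<lambda>_ _. False)"
    by (simp add: in_K0_def graph_on_def delta_def edges_def)
  ultimately obtain f :: "nat \<Rightarrow> 'a" where "closed (f ` {})"
    by blast
  then show ?thesis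
    by simp
qed

lemma delta_nonneg: "finite S \<Longrightarrow> S \<subseteq> M \<Longrightarrow> \<delta> S \<ge> 0"
  using closed_empty by (auto simp: le_closed_def delta_def edges_def)

lemma closedI:
  "B \<subseteq> M \<Longrightarrow> (\<And>B'. finite B' \<Longrightarrow> B \<subseteq> B' \<Longrightarrow> B' \<subseteq> M \<Longrightarrow> \<delta> B \<le> \<delta> B') \<Longrightarrow> closed B"
  by (auto simp: le_closed_def)

lemma closedD: "closed B \<Longrightarrow> finite B' \<Longrightarrow> B \<subseteq> B' \<Longrightarrow> B' \<subseteq> M \<Longrightarrow> \<delta> B \<le> \<delta> B'"
  by (auto simp: le_closed_def)

lemma closed_subset_M: "closed B \<Longrightarrow> B \<subseteq> M"
  by (simp add: le_closed_def)

lemma ex_closed_delta_minimal: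
  assumes "finite S" "S \<subseteq> M"
  obtains B where "finite B" "S \<subseteq> B" "closed B"
    "\<And>B'. finite B' \<Longrightarrow> S \<subseteq> B' \<Longrightarrow> B' \<subseteq> M \<Longrightarrow> \<delta> B \<le> \<delta> B'"
proof -
  let ?P = "\<lambda>B. finite B \<and> S \<subseteq> B \<and> B \<subseteq> M"
  obtain B where B: "?P B" "\<And>B'. ?P B' \<Longrightarrow> nat (\<delta> B) \<le> nat (\<delta> B')"
    using ex_has_least_nat[of ?P S "\<lambda>B. nat (\<delta> B)"] assms by blast
  then have min: "\<delta> B \<le> \<delta> B'" if "?P B'" for B'
    using that delta_nonneg by (metis nat_le_eq_zle)
  then have "closed B"
    using B(1) by (intro closedI) auto
  then show ?thesis
    using that B(1) min by blast
qed

lemma closed_Int: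
  assumes "finite B\<^sub>1" "finite B\<^sub>2" "closed B\<^sub>1" "closed B\<^sub>2"
  shows "closed (B\<^sub>1 \<inter> B\<^sub>2)"
proof (rule closedI)
  show "B\<^sub>1 \<inter> B\<^sub>2 \<subseteq> M"
    using assms closed_subset_M by blast
  fix B' assume B': "finite B'" "B\<^sub>1 \<inter> B\<^sub>2 \<subseteq> B'" "B' \<subseteq> M"
  have "\<delta> (B' \<union> B\<^sub>1) + \<delta> (B' \<inter> B\<^sub>1) \<le> \<delta> B' + \<delta> B\<^sub>1"
    using delta_submodular B' assms by blast
  moreover have "\<delta> B\<^sub>1 \<le> \<delta> (B' \<union> B\<^sub>1)"
    using closedD[OF assms(3)] B' assms closed_subset_M[OF assms(3)] by auto
  moreover have "\<delta> ((B' \<inter> B\<^sub>1) \<union> B\<^sub>2) + \<delta> (B\<^sub>1 \<inter> B\<^sub>2) \<le> \<delta> (B' \<inter> B\<^sub>1) + \<delta> B\<^sub>2"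
  proof -
    have "(B' \<inter> B\<^sub>1) \<inter> B\<^sub>2 = B\<^sub>1 \<inter> B\<^sub>2"
      using B' by blast
    then show ?thesis
      using delta_submodular[of "B' \<inter> B\<^sub>1" B\<^sub>2 mm E] B' assms by simp
  qed
  moreover have "\<delta> B\<^sub>2 \<le> \<delta> ((B' \<inter> B\<^sub>1) \<union> B\<^sub>2)"
    by (rule closedD[OF assms(4)]) (use B' assms closed_subset_M[OF assms(4)] in auto)
  ultimately show "\<delta> (B\<^sub>1 \<inter> B\<^sub>2) \<le> \<delta> B'"
    by linarith
qed

lemma cl_least: "finite B \<Longrightarrow> closed B \<Longrightarrow> S \<subseteq> B \<Longrightarrow> clM S \<subseteq> B"
  unfolding cl_def by blast

lemma cl_closed_superset:
  assumes "finite S" "S \<subseteq> M"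
  shows "finite (clM S)" "S \<subseteq> clM S" "closed (clM S)"
proof -
  let ?F = "{B. finite B \<and> S \<subseteq> B \<and> closed B}"
  obtain B where "finite B" "S \<subseteq> B" "closed B"
    using ex_closed_delta_minimal[OF assms] by metis
  then have "B \<in> ?F"
    by simp
  then obtain B\<^sub>0 where B\<^sub>0: "B\<^sub>0 \<in> ?F" "\<And>B. B \<in> ?F \<Longrightarrow> card B\<^sub>0 \<le> card B"
    using ex_has_least_nat[of "\<lambda>B. B \<in> ?F" B card] by blast
  have "B\<^sub>0 \<subseteq> B" if "B \<in> ?F" for B
  proof -
    have "B\<^sub>0 \<inter> B \<in> ?F"
      using B\<^sub>0(1) that closed_Int by auto
    then have "card B\<^sub>0 \<le> card (B\<^sub>0 \<inter> B)"
      using B\<^sub>0(2) by blast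
    then have "B\<^sub>0 \<inter> B = B\<^sub>0"
      using B\<^sub>0(1) by (metis (no_types, lifting) card_seteq finite_Int inf_le1 mem_Collect_eq)
    then show ?thesis
      by blast
  qed
  then have "clM S = B\<^sub>0"
    unfolding cl_def using B\<^sub>0(1) by blast
  then show "finite (clM S)" "S \<subseteq> clM S" "closed (clM S)"
    using B\<^sub>0(1) by auto
qed

lemma cl_subset_M: "finite S \<Longrightarrow> S \<subseteq> M \<Longrightarrow> clM S \<subseteq> M"
  by (rule closed_subset_M[OF cl_closed_superset(3)])

lemma d_le_delta:
  assumes "finite B" "S \<subseteq> B" "B \<subseteq> M"
  shows "d S \<le> \<delta> B"
proof -
  have S: "finite S" "S \<subseteq> M"
    using assms finite_subset by auto
  obtain B\<^sub>m where B\<^sub>m: "finite B\<^sub>m" "S \<subseteq> B\<^sub>m" "closed B\<^sub>m"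
    "\<And>B'. finite B' \<Longrightarrow> S \<subseteq> B' \<Longrightarrow> B' \<subseteq> M \<Longrightarrow> \<delta> B\<^sub>m \<le> \<delta> B'"
    using ex_closed_delta_minimal[OF S] by metis
  have "\<delta> (clM S) \<le> \<delta> B\<^sub>m"
    using cl_least[OF B\<^sub>m(1,3,2)] cl_closed_superset[OF S] closedD closed_subset_M B\<^sub>m by blast
  also have "\<dots> \<le> \<delta> B"
    using B\<^sub>m(4) assms by blast
  finally show ?thesis
    by (simp add: dd_def)
qed

lemma d_mono:
  assumes "finite S'" "S \<subseteq> S'" "S' \<subseteq> M"
  shows "d S \<le> d S'"
  using d_le_delta[of "clM S'" S] cl_closed_superset[OF assms(1,3)] cl_subset_M[OF assms(1,3)] assms(2)
  by (simp add: dd_def)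

lemma d_submodular:
  assumes "finite P" "finite Q" "P \<subseteq> M" "Q \<subseteq> M"
  shows "d (P \<union> Q) + d (P \<inter> Q) \<le> d P + d Q"
proof -
  note P = cl_closed_superset[OF assms(1,3)] cl_subset_M[OF assms(1,3)]
  note Q = cl_closed_superset[OF assms(2,4)] cl_subset_M[OF assms(2,4)]
  have "d (P \<union> Q) \<le> \<delta> (clM P \<union> clM Q)"
    using P Q by (intro d_le_delta) auto
  moreover have "d (P \<inter> Q) \<le> \<delta> (clM P \<inter> clM Q)"
    using P Q by (intro d_le_delta) auto
  moreover have "\<delta> (clM P \<union> clM Q) + \<delta> (clM P \<inter> clM Q) \<le> \<delta> (clM P) + \<delta> (clM Q)"
    using delta_submodular P Q by blast
  ultimately show ?thesis
    by (simp add: dd_def)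
qed

lemma d_cl_Un:
  assumes "finite S" "finite T" "S \<subseteq> M" "T \<subseteq> M"
  shows "d (clM S \<union> T) = d (S \<union> T)"
proof -
  note ST = cl_closed_superset[of "S \<union> T"] cl_subset_M[of "S \<union> T"]
  have "clM S \<subseteq> clM (S \<union> T)"
    using ST assms by (intro cl_least) auto
  then have "d (clM S \<union> T) \<le> \<delta> (clM (S \<union> T))"
    using ST assms by (intro d_le_delta) auto
  then have "d (clM S \<union> T) \<le> d (S \<union> T)"
    by (simp add: dd_def)
  moreover have "d (S \<union> T) \<le> d (clM S \<union> T)"
    using cl_closed_superset[OF assms(1,3)] cl_subset_M[OF assms(1,3)] assms by (intro d_mono) auto
  ultimately show ?thesis
    by simp
qed

lemma d_image_le:
  assumes \<sigma>: "automorphism E M \<sigma>" and S: "finite S" "S \<subseteq> M"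
  shows "d (\<sigma> ` S) \<le> d S"
proof -
  note c = cl_closed_superset[OF S] cl_subset_M[OF S]
  have iso: "partial_iso E E \<sigma> (clM S) (\<sigma> ` clM S)"
    using \<sigma> c by (auto simp: automorphism_def intro: partial_iso_restrict)
  have "d (\<sigma> ` S) \<le> \<delta> (\<sigma> ` clM S)"
    using c le_closed_image[OF \<sigma> c(3)] by (intro d_le_delta) (auto simp: le_closed_def)
  also have "\<dots> = d S"
    using delta_partial_iso[OF iso] by (simp add: dd_def)
  finally show ?thesis .
qed

lemma d_image:
  assumes \<sigma>: "automorphism E M \<sigma>" and S: "finite S" "S \<subseteq> M"
  shows "d (\<sigma> ` S) = d S"
proof -
  have "inv_into M \<sigma> ` \<sigma> ` S = S"
    using \<sigma> S by (auto simp: automorphism_def partial_iso_def bij_betw_def)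
  moreover have "\<sigma> ` S \<subseteq> M"
    using \<sigma> S by (auto simp: automorphism_def partial_iso_def bij_betw_def)
  ultimately have "d S \<le> d (\<sigma> ` S)"
    using d_image_le[OF automorphism_inv_into[OF \<sigma>], of "\<sigma> ` S"] S by simp
  then show ?thesis
    using d_image_le[OF assms] by simp
qed

end

section \<open>The geometric closure of a finite set\<close>

locale generic_gcl = generic_graph +
  fixes A :: "'a set"
  assumes A_subset_M: "A \<subseteq> M" and finite_A: "finite A"
begin

abbreviation "X \<equiv> gcl mm M E A"
abbreviation "k \<equiv> d A"

lemma gcl_subset_M: "X \<subseteq> M"
  unfolding gcl_def by blast

lemma mem_gcl_iff: "x \<in> X \<longleftrightarrow> x \<in> M \<and> d (insert x A) = k"
proof
  assume "x \<in> X"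
  then obtain A' where A': "x \<in> M" "A' \<subseteq> A" "finite A'" "d (insert x A') = d A'"
    unfolding gcl_def dd_rel_def by auto
  have "insert x A' \<union> A = insert x A"
    using A' by auto
  then have "d (insert x A) + d (insert x A' \<inter> A) \<le> d (insert x A') + d A"
    using d_submodular[of "insert x A'" A] A' finite_A A_subset_M by auto
  moreover have "d A' \<le> d (insert x A' \<inter> A)"
    using A' finite_A A_subset_M by (intro d_mono) auto
  moreover have "k \<le> d (insert x A)"
    using A' finite_A A_subset_M by (intro d_mono) auto
  ultimately show "x \<in> M \<and> d (insert x A) = k"
    using A' by linarith
next
  assume "x \<in> M \<and> d (insert x A) = k"
  then show "x \<in> X"
    unfolding gcl_def dd_rel_def using finite_A by auto
qed

lemma A_subset_gcl: "A \<subseteq> X"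
  using mem_gcl_iff A_subset_M by (auto simp: insert_absorb)

lemma d_less_if_notin_gcl: "x \<in> M \<Longrightarrow> x \<notin> X \<Longrightarrow> k < d (insert x A)"
  using mem_gcl_iff d_mono[of "insert x A" A] finite_A A_subset_M by fastforce

lemma d_Un_gcl:
  assumes "finite Z" "Z \<subseteq> X"
  shows "d (A \<union> Z) = k"
  using assms
proof (induction Z rule: finite_induct)
  case (insert z Z)
  have z: "z \<in> M" "d (insert z A) = k"
    using insert mem_gcl_iff by auto
  have fin: "finite (A \<union> Z)" "A \<union> Z \<subseteq> M"
    using insert finite_A A_subset_M gcl_subset_M by auto
  have "d (A \<union> insert z Z) + d ((A \<union> Z) \<inter> insert z A) \<le> d (A \<union> Z) + d (insert z A)"
    using d_submodular[of "A \<union> Z" "insert z A"] fin finite_A A_subset_M z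
    by (simp add: Un_insert_right sup_commute insert_commute)
  moreover have "k \<le> d ((A \<union> Z) \<inter> insert z A)"
    using fin A_subset_M finite_A by (intro d_mono) auto
  moreover have "k \<le> d (A \<union> insert z Z)"
    using fin z by (intro d_mono) auto
  moreover have "d (A \<union> Z) = k"
    using insert by blast
  ultimately show ?case
    using z by linarith
qed simp

lemma d_le_if_subset_gcl: "finite Z \<Longrightarrow> Z \<subseteq> X \<Longrightarrow> d Z \<le> k"
  using d_Un_gcl[of Z] d_mono[of "A \<union> Z" Z] finite_A A_subset_M gcl_subset_M by auto

lemma cl_Un_gcl:
  assumes "finite Z" "Z \<subseteq> X"
  shows "clM (A \<union> Z) \<subseteq> X" "\<delta> (clM (A \<union> Z)) = k"
proof -
  have AZ: "finite (A \<union> Z)" "A \<union> Z \<subseteq> M"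
    using assms finite_A A_subset_M gcl_subset_M by auto
  note c = cl_closed_superset[OF AZ] cl_subset_M[OF AZ]
  show \<delta>: "\<delta> (clM (A \<union> Z)) = k"
    using d_Un_gcl[OF assms] by (simp add: dd_def)
  show "clM (A \<union> Z) \<subseteq> X"
  proof
    fix z assume z: "z \<in> clM (A \<union> Z)"
    have "d (insert z A) \<le> \<delta> (clM (A \<union> Z))"
      using c z by (intro d_le_delta) auto
    moreover have "k \<le> d (insert z A)"
      using c z AZ by (intro d_mono) auto
    ultimately show "z \<in> X"
      using mem_gcl_iff \<delta> c z by auto
  qed
qed

lemma closed_Int_gcl:
  assumes "finite Y" "closed Y"
  shows "closed (Y \<inter> X)"
proof -
  have Y\<^sub>0: "finite (Y \<inter> X)" "Y \<inter> X \<subseteq> M"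
    using assms gcl_subset_M by auto
  have "clM (Y \<inter> X) \<subseteq> clM (A \<union> (Y \<inter> X))"
    using cl_closed_superset[of "A \<union> (Y \<inter> X)"] Y\<^sub>0 finite_A A_subset_M by (intro cl_least) auto
  then have "clM (Y \<inter> X) \<subseteq> X"
    using cl_Un_gcl[of "Y \<inter> X"] assms by auto
  moreover have "clM (Y \<inter> X) \<subseteq> Y"
    using assms by (intro cl_least) auto
  ultimately have "clM (Y \<inter> X) = Y \<inter> X"
    using cl_closed_superset(2)[OF Y\<^sub>0] by blast
  then show ?thesis
    using cl_closed_superset(3)[OF Y\<^sub>0] by simp
qed

lemma delta_less_Un_outside_gcl:
  assumes "finite Z" "Z \<subseteq> X" "finite W" "W \<subseteq> M - X" "W \<noteq> {}"
  shows "\<delta> Z < \<delta> (Z \<union> W)"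
proof -
  let ?Z = "clM (A \<union> Z)"
  have AZ: "finite (A \<union> Z)" "A \<union> Z \<subseteq> M"
    using assms finite_A A_subset_M gcl_subset_M by auto
  note Z = cl_closed_superset[OF AZ] cl_Un_gcl[OF assms(1,2)]
  obtain w where w: "w \<in> W"
    using assms(5) by blast
  have "k < d (insert w A)"
    using d_less_if_notin_gcl w assms(4) by blast
  also have "\<dots> \<le> \<delta> ((Z \<union> W) \<union> ?Z)"
    using w Z assms gcl_subset_M cl_subset_M[OF AZ] by (intro d_le_delta) auto
  finally have "k < \<delta> ((Z \<union> W) \<union> ?Z)" .
  moreover have "\<delta> ((Z \<union> W) \<union> ?Z) + \<delta> ((Z \<union> W) \<inter> ?Z) \<le> \<delta> (Z \<union> W) + \<delta> ?Z"
    using Z assms by (intro delta_submodular) auto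
  moreover have "(Z \<union> W) \<inter> ?Z = Z"
    using Z assms by blast
  ultimately show ?thesis
    using Z by simp
qed

lemma closed_if_le_closed_in_gcl:
  assumes "finite Z" "le_closed mm E Z X"
  shows "closed Z"
proof (rule closedI)
  have ZX: "Z \<subseteq> X"
    using assms by (simp add: le_closed_def)
  then show "Z \<subseteq> M"
    using gcl_subset_M by blast
  fix B assume B: "finite B" "Z \<subseteq> B" "B \<subseteq> M"
  have "\<delta> Z \<le> \<delta> (B \<inter> X)"
    using assms B ZX by (auto simp: le_closed_def)
  moreover have "\<delta> (B \<inter> X) \<le> \<delta> B"
  proof (cases "B - X = {}")
    case True
    then show ?thesis
      by (simp add: Diff_eq_empty_iff inf.absorb1)
  next
    case False
    then have "\<delta> (B \<inter> X) < \<delta> ((B \<inter> X) \<union> (B - X))"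
      using B by (intro delta_less_Un_outside_gcl) auto
    then show ?thesis
      by (simp add: Int_Diff_Un)
  qed
  ultimately show "\<delta> Z \<le> \<delta> B"
    by linarith
qed

lemma closed_image_gcl:
  assumes "automorphism E X g" "finite Z" "Z \<subseteq> X" "closed Z"
  shows "closed (g ` Z)"
proof -
  have "le_closed mm E Z X"
    using assms(4,3) gcl_subset_M by (rule le_closed_mono)
  then show ?thesis
    using assms(1,2) by (intro closed_if_le_closed_in_gcl le_closed_image) auto
qed

lemma d_Un_eq_if_between_A_gcl:
  assumes "finite W" "W \<subseteq> M" "finite Z" "A \<subseteq> Z" "Z \<subseteq> X"
  shows "d (W \<union> Z) = d (W \<union> A)"
proof -
  have WA: "finite (W \<union> A)" "W \<union> A \<subseteq> M" "Z \<subseteq> M"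
    using assms finite_A A_subset_M gcl_subset_M by auto
  have "(W \<union> A) \<union> Z = W \<union> Z"
    using assms by blast
  then have "d (W \<union> Z) + d ((W \<union> A) \<inter> Z) \<le> d (W \<union> A) + d Z"
    using d_submodular[OF WA(1) assms(3) WA(2,3)] by simp
  moreover have "k \<le> d ((W \<union> A) \<inter> Z)"
    using assms WA by (intro d_mono) auto
  moreover have "d Z \<le> k"
    using d_le_if_subset_gcl assms by blast
  moreover have "d (W \<union> A) \<le> d (W \<union> Z)"
    using assms WA by (intro d_mono) auto
  ultimately show ?thesis
    by linarith
qed

lemma delta_cl_Int_gcl:
  assumes "finite W" "W \<subseteq> M"
  shows "\<delta> (clM (A \<union> W) \<inter> X) = k"
proof -
  let ?Y = "clM (A \<union> W)"
  have AW: "finite (A \<union> W)" "A \<union> W \<subseteq> M"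
    using assms finite_A A_subset_M by auto
  note Y = cl_closed_superset[OF AW] cl_subset_M[OF AW]
  let ?Z = "clM (A \<union> (?Y \<inter> X))"
  have Y\<^sub>0: "finite (?Y \<inter> X)" "?Y \<inter> X \<subseteq> X"
    using Y by auto
  have AY\<^sub>0: "finite (A \<union> (?Y \<inter> X))" "A \<union> (?Y \<inter> X) \<subseteq> M"
    using Y\<^sub>0 finite_A A_subset_M gcl_subset_M by auto
  note Z = cl_closed_superset[OF AY\<^sub>0] cl_subset_M[OF AY\<^sub>0] cl_Un_gcl[OF Y\<^sub>0]
  have "d (?Y \<union> ?Z) = d ((A \<union> W) \<union> ?Z)"
    using d_cl_Un[OF AW(1) Z(1) AW(2) Z(4)] .
  also have "\<dots> = d (W \<union> (A \<union> ?Z))"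
    by (simp add: Un_ac)
  also have "\<dots> = d (W \<union> A)"
    using assms Z A_subset_gcl finite_A by (intro d_Un_eq_if_between_A_gcl) auto
  also have "\<dots> = \<delta> ?Y"
    by (simp add: dd_def Un_commute)
  finally have "d (?Y \<union> ?Z) = \<delta> ?Y" .
  moreover have "d (?Y \<union> ?Z) \<le> \<delta> (?Y \<union> ?Z)"
    using Y Z by (intro d_le_delta) auto
  ultimately have "\<delta> ?Y \<le> \<delta> (?Y \<union> ?Z)"
    by simp
  moreover have "\<delta> (?Y \<union> ?Z) + \<delta> (?Y \<inter> ?Z) \<le> \<delta> ?Y + \<delta> ?Z"
    using Y Z by (intro delta_submodular) auto
  moreover have "?Y \<inter> ?Z = ?Y \<inter> X"
    using Z by blast
  ultimately have "\<delta> (?Y \<inter> X) \<le> k"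
    using Z by simp
  moreover have "A \<union> (?Y \<inter> X) = ?Y \<inter> X"
    using Y A_subset_gcl by blast
  then have "k \<le> \<delta> (?Y \<inter> X)"
    using d_Un_gcl[OF Y\<^sub>0] d_le_delta[of "?Y \<inter> X" "?Y \<inter> X"] Y\<^sub>0 gcl_subset_M by auto
  ultimately show ?thesis
    by simp
qed

definition free_closed :: "'a set \<Rightarrow> bool" where
  "free_closed Y \<longleftrightarrow> finite Y \<and> Y \<subseteq> M \<and> no_edges_between E (X - Y) (Y - X) \<and>
     (\<forall>Z. finite Z \<and> Y \<inter> X \<subseteq> Z \<and> Z \<subseteq> X \<and> closed Z \<longrightarrow> closed (Y \<union> Z))"

lemma no_edges_between_gcl:
  assumes Y: "finite Y" "closed Y" "\<delta> (Y \<inter> X) = k"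
  shows "no_edges_between E (X - Y) (Y - X)"
proof -
  have "\<not> E x y" if x: "x \<in> Y - X" and y: "y \<in> X - Y" for x y
  proof
    assume "E x y"
    let ?Z = "clM (A \<union> insert y (Y \<inter> X))"
    have Y\<^sub>0: "finite (insert y (Y \<inter> X))" "insert y (Y \<inter> X) \<subseteq> X"
      using Y y by auto
    have AY\<^sub>0: "finite (A \<union> insert y (Y \<inter> X))" "A \<union> insert y (Y \<inter> X) \<subseteq> M"
      using Y\<^sub>0 finite_A A_subset_M gcl_subset_M by auto
    note Z = cl_closed_superset[OF AY\<^sub>0] cl_subset_M[OF AY\<^sub>0] cl_Un_gcl[OF Y\<^sub>0]
    have "\<delta> (Y \<union> ?Z) + \<delta> (Y \<inter> ?Z) < \<delta> Y + \<delta> ?Z"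
      using Y Z x y \<open>E x y\<close> by (intro delta_Un_Int_less_if_edge[of _ _ x y]) auto
    moreover have "Y \<inter> ?Z = Y \<inter> X"
      using Z by blast
    moreover have "\<delta> Y \<le> \<delta> (Y \<union> ?Z)"
      using Y Z closed_subset_M by (intro closedD) auto
    ultimately show False
      using Y Z by simp
  qed
  moreover have "\<not> E y x" if "x \<in> Y - X" "y \<in> X - Y" for x y
  proof -
    have "x \<in> M" "y \<in> M"
      using that Y closed_subset_M gcl_subset_M by auto
    then show ?thesis
      using calculation that edge_sym by blast
  qed
  ultimately show ?thesis
    unfolding no_edges_between_def by blast
qed

lemma delta_Un_free:
  assumes "no_edges_between E (X - Y) (Y - X)" "finite Y" "finite Q" "Y \<inter> X \<subseteq> Q" "Q \<subseteq> X"
  shows "\<delta> (Y \<union> Q) + \<delta> (Y \<inter> X) = \<delta> Y + \<delta> Q"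
proof -
  have "no_edges_between E (Y - X) (X - Y)"
    using assms(1) by (simp add: no_edges_between_commute)
  moreover have "Y - Q \<subseteq> Y - X" "Q - Y \<subseteq> X - Y"
    using assms(4,5) by blast+
  ultimately have "no_edges_between E (Y - Q) (Q - Y)"
    by (rule no_edges_between_mono)
  moreover have "Y \<inter> Q = Y \<inter> X"
    using assms(4,5) by blast
  ultimately show ?thesis
    using delta_Un_Int_eq_if_no_edges_between[OF assms(2,3)] by simp
qed

lemma closed_Un_gcl:
  assumes Y: "finite Y" "closed Y" "\<delta> (Y \<inter> X) = k"
    and Z: "finite Z" "Y \<inter> X \<subseteq> Z" "Z \<subseteq> X" "closed Z"
  shows "closed (Y \<union> Z)"
proof (rule closedI)
  note free = delta_Un_free[OF no_edges_between_gcl[OF Y] Y(1)]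
  show "Y \<union> Z \<subseteq> M"
    using Y Z closed_subset_M gcl_subset_M by blast
  fix V assume V: "finite V" "Y \<union> Z \<subseteq> V" "V \<subseteq> M"
  \<comment> \<open>Enlarging \<open>Y\<close> by the closed part \<open>?W\<close> of \<open>X\<close> does not change \<open>\<delta>\<close>, by freeness.\<close>
  let ?W = "clM (A \<union> (V \<inter> X))"
  have V\<^sub>0: "finite (V \<inter> X)" "V \<inter> X \<subseteq> X"
    using V by auto
  have AV\<^sub>0: "finite (A \<union> (V \<inter> X))" "A \<union> (V \<inter> X) \<subseteq> M"
    using V\<^sub>0 finite_A A_subset_M gcl_subset_M by auto
  note W = cl_closed_superset[OF AV\<^sub>0] cl_subset_M[OF AV\<^sub>0] cl_Un_gcl[OF V\<^sub>0]
  have "Y \<inter> X \<subseteq> ?W"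
    using V W by blast
  then have "\<delta> (Y \<union> ?W) = \<delta> Y"
    using free[of ?W] W Y by auto
  moreover have "\<delta> Y \<le> \<delta> (V \<union> (Y \<union> ?W))"
    using Y V W by (intro closedD) auto
  moreover have "V \<inter> (Y \<union> ?W) = Y \<union> (V \<inter> X)"
    using V W by blast
  then have "\<delta> (V \<union> (Y \<union> ?W)) + \<delta> (Y \<union> (V \<inter> X)) \<le> \<delta> V + \<delta> (Y \<union> ?W)"
    using delta_submodular[of V "Y \<union> ?W" mm E] V Y W by simp
  moreover have "\<delta> (Y \<union> (V \<inter> X)) + \<delta> (Y \<inter> X) = \<delta> Y + \<delta> (V \<inter> X)"
    using free[of "V \<inter> X"] V by auto
  moreover have "\<delta> (Y \<union> Z) + \<delta> (Y \<inter> X) = \<delta> Y + \<delta> Z"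
    using free[of Z] Z by auto
  moreover have "\<delta> Z \<le> \<delta> (V \<inter> X)"
    using Z V by (intro closedD) auto
  ultimately show "\<delta> (Y \<union> Z) \<le> \<delta> V"
    by linarith
qed

lemma free_closedI:
  assumes "finite Y" "closed Y" "\<delta> (Y \<inter> X) = k"
  shows "free_closed Y"
  unfolding free_closed_def
  using assms no_edges_between_gcl[OF assms] closed_Un_gcl[OF assms] closed_subset_M[OF assms(2)] by simp

lemma free_closed_empty: "free_closed {}"
  by (simp add: free_closed_def no_edges_between_def)

end

section \<open>Extending automorphisms of the geometric closure\<close>

context generic_gcl
begin

definition free_extension :: "('a \<Rightarrow> 'a) \<Rightarrow> 'a set \<Rightarrow> 'a set \<Rightarrow> bool" where
  "free_extension h C D \<longleftrightarrow> free_closed C \<and> free_closed D \<and>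
     partial_iso E E h (X \<union> C) (X \<union> D) \<and> h ` X = X \<and> h ` C = D"

lemma free_extension_automorphism_gcl:
  assumes "free_extension h C D"
  shows "automorphism E X h"
  using partial_iso_restrict[of E E h "X \<union> C" "X \<union> D" X] assms
  by (auto simp: free_extension_def automorphism_def)

lemma free_extension_inv_into:
  assumes "free_extension h C D"
  shows "free_extension (inv_into (X \<union> C) h) D C"
proof -
  have iso: "partial_iso E E h (X \<union> C) (X \<union> D)" and img: "h ` X = X" "h ` C = D"
    using assms by (auto simp: free_extension_def)
  have inj: "inj_on h (X \<union> C)"
    using iso by (simp add: partial_iso_def bij_betw_def)
  have "inv_into (X \<union> C) h ` X = X" "inv_into (X \<union> C) h ` D = C"
    using inv_into_image_cancel[OF inj, of X] inv_into_image_cancel[OF inj, of C] img by auto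
  then show ?thesis
    using assms partial_iso_inv_into[OF iso] by (simp add: free_extension_def)
qed

lemma ex_automorphism_extending_free_extension:
  assumes ext: "free_extension h C D" and Y: "finite Y" "closed Y" "C \<subseteq> Y"
  shows "\<exists>\<sigma>. automorphism E M \<sigma> \<and> (\<forall>x\<in>C \<union> (Y \<inter> X). \<sigma> x = h x)"
proof -
  have C: "free_closed C" and D: "free_closed D" and iso: "partial_iso E E h (X \<union> C) (X \<union> D)"
    and img: "h ` X = X" "h ` C = D"
    using ext by (auto simp: free_extension_def)
  have inj: "inj_on h (X \<union> C)"
    using iso by (simp add: partial_iso_def bij_betw_def)
  have Y\<^sub>0: "finite (Y \<inter> X)" "Y \<inter> X \<subseteq> X" "closed (Y \<inter> X)"
    using Y closed_Int_gcl by auto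
  have closed_dom: "closed (C \<union> (Y \<inter> X))"
    using C Y\<^sub>0 Y(3) unfolding free_closed_def by blast
  have hY\<^sub>0: "closed (h ` (Y \<inter> X))" "h ` (Y \<inter> X) \<subseteq> X"
    using closed_image_gcl[OF free_extension_automorphism_gcl[OF ext] Y\<^sub>0] img Y\<^sub>0 by auto
  have "D \<inter> X \<subseteq> h ` (Y \<inter> X)"
  proof
    fix z assume z: "z \<in> D \<inter> X"
    then obtain c where c: "c \<in> C" "z = h c"
      using img by blast
    moreover obtain x where "x \<in> X" "z = h x"
      using z img by blast
    ultimately have "c \<in> X"
      using inj by (metis UnI1 UnI2 inj_onD)
    then show "z \<in> h ` (Y \<inter> X)"
      using c Y(3) by blast
  qed
  then have closed_ran: "closed (D \<union> h ` (Y \<inter> X))"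
    using D hY\<^sub>0 Y\<^sub>0 unfolding free_closed_def by blast
  have "partial_iso E E h (C \<union> (Y \<inter> X)) (D \<union> h ` (Y \<inter> X))"
    using partial_iso_restrict[OF iso, of "C \<union> (Y \<inter> X)"] img by (auto simp: image_Un)
  moreover have "finite (C \<union> (Y \<inter> X))" "finite (D \<union> h ` (Y \<inter> X))"
    using C D Y\<^sub>0 unfolding free_closed_def by auto
  ultimately show ?thesis
    using homogeneous closed_dom closed_ran by blast
qed

lemma automorphism_maps_outside_gcl:
  assumes \<sigma>: "automorphism E M \<sigma>" and Y: "finite Y" "Y \<subseteq> M" "A \<subseteq> Y"
    and into: "\<sigma> ` (Y \<inter> X) \<subseteq> X"
  shows "\<sigma> ` (Y - X) \<inter> X = {}"
proof -
  have "\<sigma> y \<notin> X" if y: "y \<in> Y - X" for y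
  proof
    assume "\<sigma> y \<in> X"
    let ?S = "insert y (Y \<inter> X)"
    have S: "finite ?S" "?S \<subseteq> M"
      using Y y by auto
    have "k < d (insert y A)"
      using d_less_if_notin_gcl y Y by blast
    also have "\<dots> \<le> d ?S"
      using S Y A_subset_gcl by (intro d_mono) auto
    also have "\<dots> = d (\<sigma> ` ?S)"
      using d_image[OF \<sigma> S] by simp
    also have "\<dots> \<le> k"
      using S into \<open>\<sigma> y \<in> X\<close> by (intro d_le_if_subset_gcl) auto
    finally show False
      by simp
  qed
  then show ?thesis
    by blast
qed

lemma free_extension_glue:
  assumes ext: "free_extension h C D" and \<sigma>: "automorphism E M \<sigma>" "\<forall>x\<in>Y \<inter> X. \<sigma> x = h x"
    and Y: "finite Y" "closed Y" "A \<subseteq> Y" "\<delta> (Y \<inter> X) = k"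
  shows "free_extension (\<lambda>x. if x \<in> X then h x else \<sigma> x) Y (\<sigma> ` Y)"
proof -
  have hX: "partial_iso E E h X X" and img: "h ` X = X"
    using free_extension_automorphism_gcl[OF ext] by (simp_all add: automorphism_def partial_iso_def bij_betw_def)
  have injX: "inj_on h X"
    using hX by (simp add: partial_iso_def bij_betw_def)
  have YM: "Y \<subseteq> M"
    using Y(2) by (rule closed_subset_M)
  have \<sigma>Y: "partial_iso E E \<sigma> Y (\<sigma> ` Y)"
    using partial_iso_restrict[OF _ YM] \<sigma>(1) by (simp add: automorphism_def)
  have \<sigma>Y\<^sub>0: "\<sigma> ` (Y \<inter> X) = h ` (Y \<inter> X)"
    using \<sigma>(2) by (intro image_cong) auto
  moreover have "h ` (Y \<inter> X) \<subseteq> X"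
    using img by blast
  ultimately have out: "\<sigma> ` (Y - X) \<inter> X = {}"
    using automorphism_maps_outside_gcl[OF \<sigma>(1) Y(1) YM Y(3)] by simp
  then have \<sigma>Y_X: "\<sigma> ` Y \<inter> X = h ` (Y \<inter> X)"
    using \<sigma>Y\<^sub>0 img by blast
  then have "\<delta> (\<sigma> ` Y \<inter> X) = k"
    using delta_partial_iso[OF partial_iso_restrict[OF hX, of "Y \<inter> X"]] Y(4) by simp
  then have free_\<sigma>Y: "free_closed (\<sigma> ` Y)"
    using Y(1,2) le_closed_image[OF \<sigma>(1)] by (intro free_closedI) auto
  have free_Y: "free_closed Y"
    using free_closedI Y by blast
  have h_out: "h x \<notin> \<sigma> ` Y" if x: "x \<in> X - Y" for x
  proof
    assume "h x \<in> \<sigma> ` Y"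
    moreover have "h x \<in> X"
      using x img by blast
    ultimately obtain y where "y \<in> Y \<inter> X" "h x = h y"
      using \<sigma>Y_X by (metis IntI imageE)
    then show False
      using injX x by (metis DiffE IntE inj_onD)
  qed
  have "partial_iso E E (\<lambda>x. if x \<in> X then h x else \<sigma> x) (X \<union> Y) (X \<union> \<sigma> ` Y)"
  proof (rule partial_iso_glue[OF hX \<sigma>Y])
    show "\<forall>x\<in>X \<inter> Y. \<sigma> x = h x"
      using \<sigma>(2) by blast
    show "\<sigma> ` (Y - X) \<inter> X = {}"
      by (rule out)
    show "h ` (X - Y) \<inter> \<sigma> ` Y = {}"
      using h_out by blast
    show "no_edges_between E (X - Y) (Y - X)" "no_edges_between E (X - \<sigma> ` Y) (\<sigma> ` Y - X)"
      using free_Y free_\<sigma>Y by (simp_all add: free_closed_def)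
  qed
  moreover have "(\<lambda>x. if x \<in> X then h x else \<sigma> x) ` X = X"
    using img by simp
  moreover have "(\<lambda>x. if x \<in> X then h x else \<sigma> x) ` Y = \<sigma> ` Y"
    using \<sigma>(2) by (intro image_cong) auto
  ultimately show ?thesis
    using free_Y free_\<sigma>Y unfolding free_extension_def by blast
qed

lemma free_extension_forth:
  assumes ext: "free_extension h C D" and m: "m \<in> M"
  shows "\<exists>h' C' D'. free_extension h' C' D' \<and> insert m C \<subseteq> C' \<and> (\<forall>x\<in>X \<union> C. h' x = h x)"
proof -
  define Y where "Y = clM (A \<union> insert m C)"
  have W: "finite (insert m C)" "insert m C \<subseteq> M"
    using ext m by (auto simp: free_extension_def free_closed_def)
  have AW: "finite (A \<union> insert m C)" "A \<union> insert m C \<subseteq> M"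
    using W finite_A A_subset_M by auto
  have Y: "finite Y" "closed Y" "A \<union> insert m C \<subseteq> Y" "\<delta> (Y \<inter> X) = k"
    using cl_closed_superset[OF AW] delta_cl_Int_gcl[OF W] by (auto simp: Y_def)
  obtain \<sigma> where \<sigma>: "automorphism E M \<sigma>" "\<forall>x\<in>C \<union> (Y \<inter> X). \<sigma> x = h x"
    using ex_automorphism_extending_free_extension[OF ext Y(1,2)] Y(3) by blast
  have "free_extension (\<lambda>x. if x \<in> X then h x else \<sigma> x) Y (\<sigma> ` Y)"
    using Y by (intro free_extension_glue[OF ext \<sigma>(1)]) (use \<sigma>(2) in auto)
  moreover have "\<forall>x\<in>X \<union> C. (if x \<in> X then h x else \<sigma> x) = h x"
    using \<sigma>(2) by auto
  ultimately show ?thesis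
    using Y(3) by blast
qed

lemma free_extension_back:
  assumes ext: "free_extension h C D" and m: "m \<in> M"
  shows "\<exists>h' C' D'. free_extension h' C' D' \<and> C \<subseteq> C' \<and> insert m D \<subseteq> D' \<and> (\<forall>x\<in>X \<union> C. h' x = h x)"
proof -
  have inj: "inj_on h (X \<union> C)" and img: "h ` (X \<union> C) = X \<union> D" "h ` C = D"
    using ext by (auto simp: free_extension_def partial_iso_def bij_betw_def)
  obtain h\<^sub>2 C\<^sub>2 D\<^sub>2 where h\<^sub>2: "free_extension h\<^sub>2 C\<^sub>2 D\<^sub>2" "insert m D \<subseteq> C\<^sub>2"
      "\<forall>x\<in>X \<union> D. h\<^sub>2 x = inv_into (X \<union> C) h x"
    using free_extension_forth[OF free_extension_inv_into[OF ext] m] by blast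
  have inj\<^sub>2: "inj_on h\<^sub>2 (X \<union> C\<^sub>2)"
    using h\<^sub>2(1) by (simp add: free_extension_def partial_iso_def bij_betw_def)
  have h\<^sub>2_h: "h\<^sub>2 (h x) = x" "h x \<in> X \<union> C\<^sub>2" if x: "x \<in> X \<union> C" for x
  proof -
    have "h x \<in> X \<union> D"
      using img(1) x by blast
    then show "h\<^sub>2 (h x) = x" "h x \<in> X \<union> C\<^sub>2"
      using h\<^sub>2(2,3) inv_into_f_f[OF inj x] by auto
  qed
  then have "\<forall>x\<in>X \<union> C. inv_into (X \<union> C\<^sub>2) h\<^sub>2 x = h x"
    using inv_into_f_eq[OF inj\<^sub>2] by blast
  moreover have "C \<subseteq> D\<^sub>2"
  proof
    fix c assume "c \<in> C"
    then have "c = h\<^sub>2 (h c)" "h c \<in> C\<^sub>2"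
      using h\<^sub>2_h img(2) h\<^sub>2(2) by auto
    then show "c \<in> D\<^sub>2"
      using h\<^sub>2(1) by (auto simp: free_extension_def)
  qed
  ultimately show ?thesis
    using free_extension_inv_into[OF h\<^sub>2(1)] h\<^sub>2(2) by blast
qed

lemma free_extension_back_and_forth:
  assumes ext: "free_extension h C D" and m: "m \<in> M"
  shows "\<exists>h' C' D'. free_extension h' C' D' \<and> insert m C \<subseteq> C' \<and> insert m D \<subseteq> D'
    \<and> (\<forall>x\<in>X \<union> C. h' x = h x)"
proof -
  obtain h\<^sub>1 C\<^sub>1 D\<^sub>1 where h\<^sub>1: "free_extension h\<^sub>1 C\<^sub>1 D\<^sub>1" "insert m C \<subseteq> C\<^sub>1" "\<forall>x\<in>X \<union> C. h\<^sub>1 x = h x"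
    using free_extension_forth[OF ext m] by blast
  obtain h\<^sub>2 C\<^sub>2 D\<^sub>2 where h\<^sub>2: "free_extension h\<^sub>2 C\<^sub>2 D\<^sub>2" "C\<^sub>1 \<subseteq> C\<^sub>2" "insert m D\<^sub>1 \<subseteq> D\<^sub>2"
      "\<forall>x\<in>X \<union> C\<^sub>1. h\<^sub>2 x = h\<^sub>1 x"
    using free_extension_back[OF h\<^sub>1(1) m] by blast
  have "D = h\<^sub>1 ` C"
    using ext h\<^sub>1(3) by (auto simp: free_extension_def)
  also have "\<dots> \<subseteq> D\<^sub>1"
    using h\<^sub>1(1,2) by (auto simp: free_extension_def)
  finally have "insert m D \<subseteq> D\<^sub>2"
    using h\<^sub>2(3) by blast
  moreover have "insert m C \<subseteq> C\<^sub>2"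
    using h\<^sub>1(2) h\<^sub>2(2) by blast
  moreover have "\<forall>x\<in>X \<union> C. h\<^sub>2 x = h x"
    using h\<^sub>1(2,3) h\<^sub>2(4) by auto
  ultimately show ?thesis
    using h\<^sub>2(1) by blast
qed

lemma automorphism_gcl_extends:
  assumes g: "automorphism E X g"
  shows "\<exists>\<gamma>. automorphism E M \<gamma> \<and> (\<forall>x\<in>X. \<gamma> x = g x)"
proof -
  define P where "P h U V \<longleftrightarrow> (\<exists>C D. U = X \<union> C \<and> V = X \<union> D \<and> free_extension h C D)" for h U V
  have "g ` X = X"
    using g by (simp add: automorphism_def partial_iso_def bij_betw_def)
  then have "free_extension g {} {}"
    using g free_closed_empty by (simp add: free_extension_def automorphism_def)
  then have start: "P g X X"
    unfolding P_def by blast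
  have iso: "partial_iso E E h U V \<and> U \<subseteq> M \<and> V \<subseteq> M" if P: "P h U V" for h U V
  proof -
    obtain C D where "U = X \<union> C" "V = X \<union> D" "free_extension h C D"
      using P unfolding P_def by blast
    then show ?thesis
      using gcl_subset_M by (simp add: free_extension_def free_closed_def)
  qed
  have step: "\<exists>h' U' V'. P h' U' V' \<and> insert m U \<subseteq> U' \<and> insert m V \<subseteq> V' \<and> (\<forall>x\<in>U. h' x = h x)"
    if P: "P h U V" and m: "m \<in> M" for h U V m
  proof -
    obtain C D where "U = X \<union> C" "V = X \<union> D" "free_extension h C D"
      using P unfolding P_def by blast
    moreover obtain h' C' D' where "free_extension h' C' D'" "insert m C \<subseteq> C'" "insert m D \<subseteq> D'"
        "\<forall>x\<in>X \<union> C. h' x = h x"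
      using free_extension_back_and_forth[OF calculation(3) m] by blast
    ultimately have "P h' (X \<union> C') (X \<union> D') \<and> insert m U \<subseteq> X \<union> C' \<and> insert m V \<subseteq> X \<union> D'
        \<and> (\<forall>x\<in>U. h' x = h x)"
      unfolding P_def by blast
    then show ?thesis
      by blast
  qed
  show ?thesis
    using back_and_forth[OF countable_M, of P, OF iso start step] by blast
qed

end

(* The argument works for every mm. *)
theorem lemma9:
  fixes mm :: nat and M :: "'a set" and E :: "'a \<Rightarrow> 'a \<Rightarrow> bool"
    and A X :: "'a set" and g :: "'a \<Rightarrow> 'a"
  assumes "mm \<ge> 2"
    and "generic mm M E"
    and "A \<subseteq> M" and "finite A"
    and "X = gcl mm M E A"
    and "automorphism E X g"
  shows "\<exists>\<gamma>. automorphism E M \<gamma> \<and> (\<forall>x\<in>X. \<gamma> x = g x)"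
proof -
  interpret generic_gcl mm M E A
    using assms by unfold_locales auto
  show ?thesis
    using automorphism_gcl_extends assms(5,6) by blast
qed

end
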